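(* Let $p$ be a prime, $g\ge 2$, and $\pi=\langle a_1,b_1,\dots,a_g,b_g\mid \prod_{i=1}^g[a_i,b_i]=1\rangle$. Let $r\in\{1,2\}$ and let $H\subset\pi^{\mathrm{ab}}/p$ be a subgroup of rank $\ge r$. Then there exists a surjective homomorphism $q:\pi\to Q=\mathbb{Z}^{\ast r}$ (the free group of rank $r$) such that the composition $H\subset\pi^{\mathrm{ab}}/p\to Q^{\mathrm{ab}}/p\cong(\mathbb{Z}/p)^r$ is surjective. *)

theory Defs
  imports "HOL-Algebra.Algebra"
begin

text \<open>A letter (i, False) stands for the generator x_i, the letter (i, True) for its inverse.\<close>

fun cons_red :: "'a \<times> bool \<Rightarrow> ('a \<times> bool) list \<Rightarrow> ('a \<times> bool) list" where
  "cons_red x [] = [x]"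
| "cons_red x (y # ys) = (if fst x = fst y \<and> snd x \<noteq> snd y then ys else x # y # ys)"

definition reduce_word :: "('a \<times> bool) list \<Rightarrow> ('a \<times> bool) list" where
  "reduce_word w = foldr cons_red w []"

definition free_grp :: "nat \<Rightarrow> (nat \<times> bool) list monoid" where
  "free_grp n = \<lparr> carrier = {w. (\<forall>l \<in> set w. fst l < n) \<and> reduce_word w = w},
                  monoid.mult = (\<lambda>u v. reduce_word (u @ v)),
                  monoid.one = [] \<rparr>"

text \<open>Generators a_i = x_(2i), b_i = x_(2i+1) for i < g; relator prod_i [a_i, b_i],
  with [a,b] = a b a^-1 b^-1.\<close>
definition surface_relator :: "nat \<Rightarrow> (nat \<times> bool) list" where
  "surface_relator g = reduce_word
     (concat (map (\<lambda>i. [(2*i, False), (2*i+1, False), (2*i, True), (2*i+1, True)]) [0..<g]))"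

definition normal_closure :: "('a, 'b) monoid_scheme \<Rightarrow> 'a set \<Rightarrow> 'a set" where
  "normal_closure G S =
     generate G {inv\<^bsub>G\<^esub> x \<otimes>\<^bsub>G\<^esub> s \<otimes>\<^bsub>G\<^esub> x | x s. x \<in> carrier G \<and> s \<in> S}"

definition surface_group :: "nat \<Rightarrow> (nat \<times> bool) list set monoid" where
  "surface_group g = free_grp (2*g) Mod normal_closure (free_grp (2*g)) {surface_relator g}"

definition ab_modp_sub :: "nat \<Rightarrow> ('a, 'b) monoid_scheme \<Rightarrow> 'a set" where
  "ab_modp_sub p G = generate G (derived_set G (carrier G) \<union> {x [^]\<^bsub>G\<^esub> p | x. x \<in> carrier G})"

definition ab_modp :: "nat \<Rightarrow> ('a, 'b) monoid_scheme \<Rightarrow> 'a set monoid" where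
  "ab_modp p G = G Mod ab_modp_sub p G"

definition subgroup_rank :: "('a, 'b) monoid_scheme \<Rightarrow> 'a set \<Rightarrow> nat" where
  "subgroup_rank G H = (LEAST n. \<exists>S. S \<subseteq> H \<and> finite S \<and> card S = n \<and> generate G S = H)"

end

theory Submission
  imports Defs "HOL-Number_Theory.Cong"
begin

(* A substitution f sending the generators a_i = x_2i, b_i = x_2i+1 of F_2g to words of the free
   group F_r and killing the surface relator induces a homomorphism from the surface group pi to
   F_r; it is onto when every generator y_k of F_r is some f(x_j). On mod-p abelianizations,
   pi^ab/p = (Z/p)^2g and the induced map is the linear map given by exponent sums, so it is enough
   that the exponent-sum vectors of elements of H span (Z/p)^r after applying f.
   For r = 1, rank H >= 1 gives an element with a coordinate c prime to p, and x_c |-> y_0 (all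
   other generators |-> 1) works. For r = 2, rank H >= 2 gives two elements with a 2x2 minor prime
   to p. If some such minor involves generators j, k of two different handles, x_j |-> y_0,
   x_k |-> y_1 kills the relator. Otherwise the good minor is the one of a single handle i and all
   columns outside that handle vanish mod p; then a_i |-> y_0, b_i |-> y_1, a_i' |-> y_1,
   b_i' |-> y_0 for another handle i' sends the relator to [y_0,y_1][y_1,y_0] = 1 and keeps the
   minor mod p. *)

section \<open>Reduced words and the free group\<close>

fun reduced :: "('a \<times> bool) list \<Rightarrow> bool" where
  "reduced [] = True"
| "reduced [x] = True"
| "reduced (x # y # ys) = (\<not> (fst x = fst y \<and> snd x \<noteq> snd y) \<and> reduced (y # ys))"

definition inv_letter :: "'a \<times> bool \<Rightarrow> 'a \<times> bool" where
  "inv_letter l = (fst l, \<not> snd l)"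

definition inv_word :: "('a \<times> bool) list \<Rightarrow> ('a \<times> bool) list" where
  "inv_word w = rev (map inv_letter w)"

definition gen :: "nat \<Rightarrow> (nat \<times> bool) list" where
  "gen k = [(k, False)]"

lemma inv_letter_inv_letter [simp]: "inv_letter (inv_letter x) = x"
  by (simp add: inv_letter_def)

lemma cons_red_Cons: "cons_red x (y # ys) = (if y = inv_letter x then ys else x # y # ys)"
  by (cases x, cases y) (auto simp: inv_letter_def)

lemma reduced_tl: "reduced (x # xs) \<Longrightarrow> reduced xs"
  by (cases xs) auto

lemma reduced_cons_red: "reduced w \<Longrightarrow> reduced (cons_red x w)"
  by (cases w rule: reduced.cases) (auto dest: reduced_tl)

lemma reduced_foldr_cons_red: "reduced w \<Longrightarrow> reduced (foldr cons_red a w)"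
  by (induction a) (auto intro: reduced_cons_red)

lemma reduced_reduce_word: "reduced (reduce_word w)"
  unfolding reduce_word_def by (rule reduced_foldr_cons_red) simp

lemma cons_red_reduced: "reduced (x # w) \<Longrightarrow> cons_red x w = x # w"
  by (cases w) auto

lemma reduce_word_reduced: "reduced w \<Longrightarrow> reduce_word w = w"
proof (induction w)
  case (Cons x w)
  then have "reduce_word w = w" using reduced_tl by blast
  then show ?case using cons_red_reduced[OF Cons.prems] by (simp add: reduce_word_def)
qed (simp add: reduce_word_def)

lemma reduce_word_eq_iff: "reduce_word w = w \<longleftrightarrow> reduced w"
  by (metis reduced_reduce_word reduce_word_reduced)

lemma reduce_word_idem [simp]: "reduce_word (reduce_word w) = reduce_word w"
  by (simp add: reduce_word_reduced reduced_reduce_word)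

lemma reduce_word_Cons: "reduce_word (x # w) = cons_red x (reduce_word w)"
  by (simp add: reduce_word_def)

lemma reduce_word_append: "reduce_word (a @ b) = foldr cons_red a (reduce_word b)"
  unfolding reduce_word_def by simp

lemma cons_red_cancel:
  "reduced w \<Longrightarrow> cons_red x (cons_red (inv_letter x) w) = w"
  by (cases w) (auto simp: cons_red_Cons cons_red_reduced simp del: cons_red.simps(2))

lemma cons_red_cancel': "reduced w \<Longrightarrow> cons_red (inv_letter x) (cons_red x w) = w"
  using cons_red_cancel[of w "inv_letter x"] by simp

lemma foldr_cons_red_cons_red:
  "reduced w \<Longrightarrow> foldr cons_red (cons_red x z) w = cons_red x (foldr cons_red z w)"
  by (cases z)
     (auto simp: cons_red_Cons cons_red_cancel reduced_foldr_cons_red simp del: cons_red.simps(2))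

lemma foldr_cons_red_reduce_word:
  "reduced w \<Longrightarrow> foldr cons_red a w = foldr cons_red (reduce_word a) w"
  by (induction a) (simp add: reduce_word_def, simp add: reduce_word_Cons foldr_cons_red_cons_red)

lemma reduce_word_append_right: "reduce_word (a @ b) = reduce_word (a @ reduce_word b)"
  by (simp add: reduce_word_append)

lemma reduce_word_append_left: "reduce_word (a @ b) = reduce_word (reduce_word a @ b)"
  unfolding reduce_word_append by (rule foldr_cons_red_reduce_word[OF reduced_reduce_word])

lemma reduce_word_append_both:
  "reduce_word (a @ b) = reduce_word (reduce_word a @ reduce_word b)"
  by (metis reduce_word_append_left reduce_word_append_right)

lemma reduce_word_concat_map:
  "reduce_word (concat (map B xs)) = reduce_word (concat (map (\<lambda>i. reduce_word (B i)) xs))"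
proof (induction xs)
  case (Cons x xs)
  have "reduce_word (concat (map B (x # xs)))
      = reduce_word (reduce_word (B x) @ reduce_word (concat (map B xs)))"
    by (simp flip: reduce_word_append_both)
  also have "\<dots> = reduce_word (concat (map (\<lambda>i. reduce_word (B i)) (x # xs)))"
    by (simp add: Cons flip: reduce_word_append_right)
  finally show ?case .
qed simp

lemma reduced_snoc_snoc:
  "reduced ((zs @ [a]) @ [b]) \<longleftrightarrow> reduced (zs @ [a]) \<and> \<not> (fst a = fst b \<and> snd a \<noteq> snd b)"
  by (induction zs rule: reduced.induct) auto

lemma reduced_inv_word: "reduced w \<Longrightarrow> reduced (inv_word w)"
proof (induction w rule: reduced.induct)
  case (3 x y ys)
  then have "reduced (rev (map inv_letter ys) @ [inv_letter y])"
    by (simp add: inv_word_def)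
  moreover have
    "inv_word (x # y # ys) = (rev (map inv_letter ys) @ [inv_letter y]) @ [inv_letter x]"
    by (simp add: inv_word_def)
  ultimately show ?case
    using "3.prems" by (simp only: reduced_snoc_snoc) (auto simp: inv_letter_def)
qed (auto simp: inv_word_def)

lemma inv_word_inv_word [simp]: "inv_word (inv_word w) = w"
  by (simp add: inv_word_def rev_map comp_def inv_letter_def)

lemma reduce_word_inv_word_append: "reduced w \<Longrightarrow> reduce_word (inv_word w @ w) = []"
proof (induction w)
  case (Cons x w)
  have w: "reduced w" using Cons.prems reduced_tl by blast
  have "reduce_word (inv_letter x # x # w) = w"
    using cons_red_cancel'[OF w] by (simp add: reduce_word_Cons reduce_word_reduced[OF w])
  moreover have "inv_word (x # w) @ x # w = inv_word w @ (inv_letter x # x # w)"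
    by (simp add: inv_word_def)
  ultimately have "reduce_word (inv_word (x # w) @ x # w) = reduce_word (inv_word w @ w)"
    by (metis reduce_word_append_right)
  then show ?case using Cons.IH w by simp
qed (simp add: inv_word_def reduce_word_def)

lemma reduce_word_append_inv_word: "reduced w \<Longrightarrow> reduce_word (w @ inv_word w) = []"
  using reduce_word_inv_word_append[of "inv_word w"] reduced_inv_word by fastforce

lemma set_cons_red: "set (cons_red x w) \<subseteq> insert x (set w)"
  by (cases w) auto

lemma set_reduce_word: "set (reduce_word w) \<subseteq> set w"
  unfolding reduce_word_def by (induction w) (auto dest: subsetD[OF set_cons_red])

lemma fst_inv_letter [simp]: "fst (inv_letter l) = fst l"
  by (simp add: inv_letter_def)

lemma set_inv_word: "set (inv_word w) = inv_letter ` set w"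
  by (simp add: inv_word_def)

lemma free_grp_carrier_iff: "w \<in> carrier (free_grp n) \<longleftrightarrow> (\<forall>l\<in>set w. fst l < n) \<and> reduced w"
  by (simp add: free_grp_def reduce_word_eq_iff)

lemma free_grp_mult: "x \<otimes>\<^bsub>free_grp n\<^esub> y = reduce_word (x @ y)"
  by (simp add: free_grp_def)

lemma free_grp_one: "\<one>\<^bsub>free_grp n\<^esub> = []"
  by (simp add: free_grp_def)

lemma reduce_word_closed:
  "\<forall>l\<in>set w. fst l < n \<Longrightarrow> reduce_word w \<in> carrier (free_grp n)"
  unfolding free_grp_carrier_iff using set_reduce_word reduced_reduce_word by blast

lemma inv_word_closed: "w \<in> carrier (free_grp n) \<Longrightarrow> inv_word w \<in> carrier (free_grp n)"
  by (auto simp: free_grp_carrier_iff reduced_inv_word set_inv_word)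

lemma free_grp_group: "group (free_grp n)"
proof (rule groupI)
  fix x y assume "x \<in> carrier (free_grp n)" "y \<in> carrier (free_grp n)"
  then show "x \<otimes>\<^bsub>free_grp n\<^esub> y \<in> carrier (free_grp n)"
    unfolding free_grp_mult by (intro reduce_word_closed) (auto simp: free_grp_carrier_iff)
next
  fix x y z
  show "x \<otimes>\<^bsub>free_grp n\<^esub> y \<otimes>\<^bsub>free_grp n\<^esub> z = x \<otimes>\<^bsub>free_grp n\<^esub> (y \<otimes>\<^bsub>free_grp n\<^esub> z)"
    by (simp add: free_grp_mult)
       (metis append_assoc reduce_word_append_left reduce_word_append_right)
next
  fix x assume x: "x \<in> carrier (free_grp n)"
  then show "\<one>\<^bsub>free_grp n\<^esub> \<otimes>\<^bsub>free_grp n\<^esub> x = x"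
    by (simp add: free_grp_def)
  show "\<exists>y\<in>carrier (free_grp n). y \<otimes>\<^bsub>free_grp n\<^esub> x = \<one>\<^bsub>free_grp n\<^esub>"
    using x inv_word_closed reduce_word_inv_word_append
    by (metis free_grp_carrier_iff free_grp_mult free_grp_one)
qed (simp add: free_grp_def reduce_word_def)

lemma free_grp_inv:
  assumes x: "x \<in> carrier (free_grp n)"
  shows "inv\<^bsub>free_grp n\<^esub> x = inv_word x"
proof -
  have "reduced x" using x by (simp add: free_grp_carrier_iff)
  then show ?thesis
    using group.inv_equality[OF free_grp_group _ x inv_word_closed[OF x]]
    by (simp add: free_grp_mult free_grp_one reduce_word_inv_word_append)
qed

lemma gen_eq_iff: "gen i = gen j \<longleftrightarrow> i = j"
  by (simp add: gen_def)

lemma gen_closed: "k < n \<Longrightarrow> gen k \<in> carrier (free_grp n)"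
  by (simp add: gen_def free_grp_carrier_iff)

lemma Cons_eq_letter_mult:
  "l # w \<in> carrier (free_grp n) \<Longrightarrow> l # w = [l] \<otimes>\<^bsub>free_grp n\<^esub> w"
  by (simp add: free_grp_mult free_grp_carrier_iff reduce_word_reduced cons_red_reduced reduced_tl)

lemma Cons_closed:
  "l # w \<in> carrier (free_grp n) \<Longrightarrow> w \<in> carrier (free_grp n) \<and> [l] \<in> carrier (free_grp n)"
  by (auto simp: free_grp_carrier_iff dest: reduced_tl)

lemma letter_eq_gen_pow:
  "[l] \<in> carrier (free_grp n) \<Longrightarrow>
     fst l < n \<and> [l] = gen (fst l) [^]\<^bsub>free_grp n\<^esub> (if snd l then -1 else 1 :: int)"
proof -
  assume l: "[l] \<in> carrier (free_grp n)"
  then have n: "fst l < n" by (simp add: free_grp_carrier_iff)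
  have "inv\<^bsub>free_grp n\<^esub> gen (fst l) = [(fst l, True)]"
    using free_grp_inv[OF gen_closed[OF n]] by (simp add: gen_def inv_word_def inv_letter_def)
  then show ?thesis
    using n gen_closed[OF n] by (cases l) (auto simp: gen_def group.int_pow_neg[OF free_grp_group]
                                              group.int_pow_1[OF free_grp_group])
qed

lemma free_grp_generate_gen: "generate (free_grp n) (gen ` {..<n}) = carrier (free_grp n)"
proof
  show "generate (free_grp n) (gen ` {..<n}) \<subseteq> carrier (free_grp n)"
    by (rule group.generate_incl[OF free_grp_group]) (auto intro: gen_closed)
next
  show "carrier (free_grp n) \<subseteq> generate (free_grp n) (gen ` {..<n})"
  proof
    fix w assume "w \<in> carrier (free_grp n)"
    then show "w \<in> generate (free_grp n) (gen ` {..<n})"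
    proof (induction w)
      case Nil
      then show ?case using generate.one[of "free_grp n"] by (simp add: free_grp_one)
    next
      case (Cons l w)
      have l: "fst l < n \<and> [l] = gen (fst l) [^]\<^bsub>free_grp n\<^esub> (if snd l then -1 else 1 :: int)"
        using letter_eq_gen_pow Cons_closed[OF Cons.prems] by blast
      then have "gen (fst l) \<in> generate (free_grp n) (gen ` {..<n})"
        by (auto intro: generate.incl)
      then have "[l] \<in> generate (free_grp n) (gen ` {..<n})"
        using l group.subgroup_int_pow_closed[OF free_grp_group
                group.generate_is_subgroup[OF free_grp_group]] gen_closed
        by (metis (no_types, lifting) image_subset_iff lessThan_iff)
      then show ?case
        using Cons Cons_closed[OF Cons.prems] Cons_eq_letter_mult[OF Cons.prems]
        by (metis generate.eng)
    qed
  qed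
qed

section \<open>Exponent sums and substitution homomorphisms\<close>

definition exp_sum :: "(nat \<times> bool) list \<Rightarrow> nat \<Rightarrow> int" where
  "exp_sum w k = (\<Sum>l\<leftarrow>w. if fst l = k then (if snd l then -1 else 1) else 0)"

lemma exp_sum_Nil [simp]: "exp_sum [] k = 0"
  by (simp add: exp_sum_def)

lemma exp_sum_Cons:
  "exp_sum (l # w) k = (if fst l = k then (if snd l then -1 else 1) else 0) + exp_sum w k"
  by (simp add: exp_sum_def)

lemma exp_sum_append [simp]: "exp_sum (u @ v) k = exp_sum u k + exp_sum v k"
  by (simp add: exp_sum_def)

lemma exp_sum_reduce_word [simp]: "exp_sum (reduce_word w) k = exp_sum w k"
proof -
  have "exp_sum (cons_red x v) k = exp_sum (x # v) k" for x v
    by (cases v) (auto simp: exp_sum_Cons cons_red_Cons inv_letter_def simp del: cons_red.simps(2))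
  then show ?thesis unfolding reduce_word_def by (induction w) (auto simp: exp_sum_Cons)
qed

lemma exp_sum_inv_word [simp]: "exp_sum (inv_word w) k = - exp_sum w k"
  by (induction w) (auto simp: inv_word_def exp_sum_Cons inv_letter_def)

lemma exp_sum_gen: "exp_sum (gen j) k = (if j = k then 1 else 0)"
  by (simp add: gen_def exp_sum_def)

lemma exp_sum_hom: "(\<lambda>w. exp_sum w k) \<in> hom (free_grp n) integer_group"
  by (rule homI) (simp_all add: free_grp_mult)

lemma exp_sum_mult: "exp_sum (x \<otimes>\<^bsub>free_grp n\<^esub> y) k = exp_sum x k + exp_sum y k"
  by (simp add: free_grp_mult)

lemma exp_sum_int_pow:
  "x \<in> carrier (free_grp n) \<Longrightarrow> exp_sum (x [^]\<^bsub>free_grp n\<^esub> (i::int)) k = i * exp_sum x k"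
  using hom_int_pow[OF exp_sum_hom _ free_grp_group group_integer_group] by simp

definition letter_subst :: "(nat \<Rightarrow> (nat \<times> bool) list) \<Rightarrow> nat \<times> bool \<Rightarrow> (nat \<times> bool) list" where
  "letter_subst f l = (if snd l then inv_word (f (fst l)) else f (fst l))"

definition free_subst :: "(nat \<Rightarrow> (nat \<times> bool) list) \<Rightarrow> (nat \<times> bool) list \<Rightarrow> (nat \<times> bool) list" where
  "free_subst f w = reduce_word (concat (map (letter_subst f) w))"

lemma reduce_word_letter_subst_cancel:
  assumes "\<forall>k. reduced (f k)"
  shows "reduce_word (letter_subst f x @ letter_subst f (inv_letter x)) = []"
  using assms reduce_word_inv_word_append reduce_word_append_inv_word
  by (auto simp: letter_subst_def inv_letter_def)

lemma free_subst_cons_red: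
  assumes "\<forall>k. reduced (f k)"
  shows "reduce_word (concat (map (letter_subst f) (cons_red x z)))
           = reduce_word (letter_subst f x @ concat (map (letter_subst f) z))"
proof (cases z)
  case (Cons y zs)
  show ?thesis
  proof (cases "y = inv_letter x")
    case True
    have "reduce_word (letter_subst f x @ concat (map (letter_subst f) z))
          = reduce_word ((letter_subst f x @ letter_subst f y)
                           @ concat (map (letter_subst f) zs))"
      using Cons by simp
    also have "\<dots> = reduce_word (concat (map (letter_subst f) zs))"
      by (subst reduce_word_append_left) (simp add: True reduce_word_letter_subst_cancel[OF assms])
    finally show ?thesis using Cons True by (simp add: cons_red_Cons del: cons_red.simps(2))
  next
    case False
    then show ?thesis using Cons by (simp add: cons_red_Cons del: cons_red.simps(2))
  qed
qed simp

lemma free_subst_reduce_word: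
  assumes "\<forall>k. reduced (f k)"
  shows "free_subst f (reduce_word w) = free_subst f w"
  unfolding free_subst_def
proof (induction w)
  case (Cons x w)
  have "reduce_word (concat (map (letter_subst f) (reduce_word (x # w))))
      = reduce_word (letter_subst f x
                     @ reduce_word (concat (map (letter_subst f) (reduce_word w))))"
    by (simp add: reduce_word_Cons free_subst_cons_red[OF assms] flip: reduce_word_append_right)
  also have "\<dots> = reduce_word (concat (map (letter_subst f) (x # w)))"
    by (simp add: Cons flip: reduce_word_append_right)
  finally show ?case .
qed (simp add: reduce_word_def)

lemma free_subst_closed:
  assumes "\<forall>k<m. f k \<in> carrier (free_grp n)" "w \<in> carrier (free_grp m)"
  shows "free_subst f w \<in> carrier (free_grp n)"
  unfolding free_subst_def
proof (rule reduce_word_closed, intro ballI)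
  fix l assume "l \<in> set (concat (map (letter_subst f) w))"
  then obtain x where x: "x \<in> set w" "l \<in> set (letter_subst f x)" by auto
  then have "f (fst x) \<in> carrier (free_grp n)" using assms by (auto simp: free_grp_carrier_iff)
  then show "fst l < n"
    using x(2) by (auto simp: letter_subst_def free_grp_carrier_iff set_inv_word split: if_splits)
qed

lemma free_subst_hom:
  assumes "\<forall>k<m. f k \<in> carrier (free_grp n)" "\<forall>k. reduced (f k)"
  shows "free_subst f \<in> hom (free_grp m) (free_grp n)"
proof (rule homI)
  fix x y
  show "free_subst f (x \<otimes>\<^bsub>free_grp m\<^esub> y) = free_subst f x \<otimes>\<^bsub>free_grp n\<^esub> free_subst f y"
    unfolding free_grp_mult free_subst_reduce_word[OF assms(2)]
    by (simp add: free_subst_def flip: reduce_word_append_both)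
qed (use free_subst_closed assms in blast)

lemma free_subst_gen: "\<forall>k. reduced (f k) \<Longrightarrow> free_subst f (gen j) = f j"
  by (simp add: free_subst_def gen_def letter_subst_def reduce_word_reduced)

lemma exp_sum_free_subst:
  assumes "w \<in> carrier (free_grp m)"
  shows "exp_sum (free_subst f w) k = (\<Sum>j<m. exp_sum w j * exp_sum (f j) k)"
proof -
  have "\<forall>l\<in>set w. fst l < m" using assms by (simp add: free_grp_carrier_iff)
  then show ?thesis
  proof (induction w)
    case (Cons l w)
    let ?s = "\<lambda>j. if fst l = j then (if snd l then -1 else 1) * exp_sum (f j) k else 0"
    have "exp_sum (l # w) j * exp_sum (f j) k = ?s j + exp_sum w j * exp_sum (f j) k" for j
      by (simp add: exp_sum_Cons distrib_right)
    then have "(\<Sum>j<m. exp_sum (l # w) j * exp_sum (f j) k)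
        = (\<Sum>j<m. ?s j) + (\<Sum>j<m. exp_sum w j * exp_sum (f j) k)"
      by (simp only: sum.distrib)
    also have "(\<Sum>j<m. ?s j) = (if snd l then -1 else 1) * exp_sum (f (fst l)) k"
      using Cons.prems by simp
    finally show ?case using Cons by (simp add: free_subst_def letter_subst_def)
  qed (simp add: free_subst_def)
qed

lemma (in group) int_pow_cong:
  assumes "x \<in> carrier G" "x [^] (p::nat) = \<one>" "[a = b] (mod int p)"
  shows "x [^] (a::int) = x [^] (b::int)"
proof -
  have "ord x dvd p" using assms(1,2) pow_eq_id by blast
  moreover have "int p dvd b - a" using assms(3) by (simp add: cong_iff_dvd_diff dvd_diff_commute)
  ultimately show ?thesis using assms(1) int_pow_eq by (meson dvd_trans int_dvd_int_iff)
qed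

lemma free_hom_eq_finprod:
  assumes G: "comm_group G" and h: "h \<in> hom (free_grp n) G" and w: "w \<in> carrier (free_grp n)"
  shows "h w = (\<Otimes>\<^bsub>G\<^esub>k\<in>{..<n}. h (gen k) [^]\<^bsub>G\<^esub> exp_sum w k)"
  using w
proof (induction w)
  interpret G: comm_group G by (rule G)
  interpret h: group_hom "free_grp n" G h
    using h free_grp_group G.is_group by (simp add: group_hom_def group_hom_axioms_def)
  have gen_img: "h (gen k) \<in> carrier G" if "k < n" for k
    using gen_closed[OF that] by simp
  {
    case Nil
    then show ?case using h.hom_one by (simp add: free_grp_one)
  next
    case (Cons l w)
    have w: "w \<in> carrier (free_grp n)" and l: "[l] \<in> carrier (free_grp n)"
      using Cons_closed[OF Cons.prems] by auto
    obtain e :: int where e: "fst l < n" "[l] = gen (fst l) [^]\<^bsub>free_grp n\<^esub> e"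
      "\<And>k. exp_sum (l # w) k = (if k = fst l then e else 0) + exp_sum w k"
      using letter_eq_gen_pow[OF l] by (auto simp: exp_sum_Cons)
    have "h (l # w) = h (gen (fst l)) [^]\<^bsub>G\<^esub> e \<otimes>\<^bsub>G\<^esub> h w"
      using Cons_eq_letter_mult[OF Cons.prems] w l e gen_closed by (simp add: h.hom_int_pow)
    also have "h (gen (fst l)) [^]\<^bsub>G\<^esub> e
        = (\<Otimes>\<^bsub>G\<^esub>k\<in>{..<n}. if k = fst l then h (gen k) [^]\<^bsub>G\<^esub> e else \<one>\<^bsub>G\<^esub>)"
      using e(1) gen_img by (intro G.finprod_singleton_swap[symmetric]) auto
    also have "\<dots> = (\<Otimes>\<^bsub>G\<^esub>k\<in>{..<n}. h (gen k) [^]\<^bsub>G\<^esub> (if k = fst l then e else 0))"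
    proof -
      have "(if k = fst l then h (gen k) [^]\<^bsub>G\<^esub> e else \<one>\<^bsub>G\<^esub>)
              = h (gen k) [^]\<^bsub>G\<^esub> (if k = fst l then e else 0)" for k
        by simp
      then show ?thesis by (simp only:)
    qed
    also have "\<dots> \<otimes>\<^bsub>G\<^esub> h w = (\<Otimes>\<^bsub>G\<^esub>k\<in>{..<n}.
        h (gen k) [^]\<^bsub>G\<^esub> (if k = fst l then e else 0) \<otimes>\<^bsub>G\<^esub> h (gen k) [^]\<^bsub>G\<^esub> exp_sum w k)"
      using Cons.IH[OF w] gen_img by (simp add: Pi_def)
    also have "\<dots> = (\<Otimes>\<^bsub>G\<^esub>k\<in>{..<n}. h (gen k) [^]\<^bsub>G\<^esub> exp_sum (l # w) k)"
      using gen_img by (intro G.finprod_cong') (simp_all add: Pi_def e(3) G.int_pow_mult)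
    finally show ?case .
  }
qed

lemma free_hom_eq_if_exp_sum_cong:
  assumes G: "comm_group G" and h: "h \<in> hom (free_grp n) G"
    and exponent: "\<forall>k<n. h (gen k) [^]\<^bsub>G\<^esub> (p::nat) = \<one>\<^bsub>G\<^esub>"
    and u: "u \<in> carrier (free_grp n)" and v: "v \<in> carrier (free_grp n)"
    and cong: "\<forall>k<n. [exp_sum u k = exp_sum v k] (mod int p)"
  shows "h u = h v"
proof -
  interpret G: comm_group G by (rule G)
  have gen_img: "h (gen k) \<in> carrier G" if "k < n" for k
    using gen_closed[OF that] h by (auto simp: hom_def)
  show ?thesis
    unfolding free_hom_eq_finprod[OF G h u] free_hom_eq_finprod[OF G h v]
    using gen_img exponent cong by (intro G.finprod_cong') (auto intro: G.int_pow_cong)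
qed

context group
begin

lemma ab_modp_sub_subgroup: "subgroup (ab_modp_sub p G) G"
  unfolding ab_modp_sub_def by (rule generate_is_subgroup) (auto dest: derived_set_incl)

lemma commutator_mem_ab_modp_sub:
  "a \<in> carrier G \<Longrightarrow> b \<in> carrier G \<Longrightarrow> a \<otimes> b \<otimes> inv a \<otimes> inv b \<in> ab_modp_sub p G"
  unfolding ab_modp_sub_def by (rule generate.incl) blast

lemma pow_mem_ab_modp_sub: "x \<in> carrier G \<Longrightarrow> x [^] p \<in> ab_modp_sub p G"
  unfolding ab_modp_sub_def by (rule generate.incl) blast

lemma ab_modp_sub_normal: "ab_modp_sub p G \<lhd> G"
  unfolding normal_inv_iff
proof (intro conjI ab_modp_sub_subgroup ballI)
  fix x h assume x: "x \<in> carrier G" and h: "h \<in> ab_modp_sub p G"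
  have hG: "h \<in> carrier G" using h subgroup.mem_carrier[OF ab_modp_sub_subgroup] by blast
  have "x \<otimes> h \<otimes> inv x \<otimes> inv h \<otimes> h \<in> ab_modp_sub p G"
    using commutator_mem_ab_modp_sub[OF x hG] h by (rule subgroup.m_closed[OF ab_modp_sub_subgroup])
  then show "x \<otimes> h \<otimes> inv x \<in> ab_modp_sub p G" using x hG by (simp add: m_assoc)
qed

lemma ab_modp_comm_group: "comm_group (ab_modp p G)"
proof -
  interpret K: normal "ab_modp_sub p G" G by (rule ab_modp_sub_normal)
  have swap: "ab_modp_sub p G #> (a \<otimes> b) = ab_modp_sub p G #> (b \<otimes> a)"
    if a: "a \<in> carrier G" and b: "b \<in> carrier G" for a b
  proof -
    have "(a \<otimes> b) \<otimes> inv (b \<otimes> a) \<in> ab_modp_sub p G"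
      using commutator_mem_ab_modp_sub[OF a b] a b by (simp add: inv_mult_group m_assoc)
    then have "a \<otimes> b \<in> ab_modp_sub p G #> (b \<otimes> a)"
      using K.rcos_module[OF is_group] a b by simp
    then show ?thesis using repr_independence K.subgroup_axioms a b by (metis m_closed)
  qed
  show ?thesis
    unfolding ab_modp_def
    by (intro group.group_comm_groupI[OF K.factorgroup_is_group])
       (auto simp: carrier_FactGroup K.rcos_sum swap)
qed

lemma ab_modp_pow_eq_one:
  assumes "C \<in> carrier (ab_modp p G)"
  shows "C [^]\<^bsub>ab_modp p G\<^esub> p = \<one>\<^bsub>ab_modp p G\<^esub>"
proof -
  interpret K: normal "ab_modp_sub p G" G by (rule ab_modp_sub_normal)
  obtain a where a: "a \<in> carrier G" "C = ab_modp_sub p G #> a"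
    using assms unfolding ab_modp_def carrier_FactGroup by blast
  have "ab_modp_sub p G #> (a [^] p) = ab_modp_sub p G"
    using coset_join2[OF _ K.subgroup_axioms pow_mem_ab_modp_sub] a by simp
  then show ?thesis using K.FactGroup_pow a unfolding ab_modp_def by simp
qed

lemma ab_modp_sub_subset_kernel:
  assumes A: "comm_group A" and h: "h \<in> hom G A"
    and exponent: "\<forall>y\<in>carrier A. y [^]\<^bsub>A\<^esub> p = \<one>\<^bsub>A\<^esub>"
  shows "ab_modp_sub p G \<subseteq> kernel G A h"
proof -
  interpret A: comm_group A by (rule A)
  interpret h: group_hom G A h
    by (simp add: group_hom_def group_hom_axioms_def h A.is_group is_group)
  show ?thesis
    unfolding ab_modp_sub_def
  proof (rule generate_subgroup_incl[OF _ h.subgroup_kernel], intro subsetI)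
    fix x assume "x \<in> derived_set G (carrier G) \<union> {x [^] p |x. x \<in> carrier G}"
    then show "x \<in> kernel G A h"
    proof
      assume "x \<in> derived_set G (carrier G)"
      then obtain a b where "a \<in> carrier G" "b \<in> carrier G" "x = a \<otimes> b \<otimes> inv a \<otimes> inv b"
        by blast
      moreover have "h a \<otimes>\<^bsub>A\<^esub> (h b \<otimes>\<^bsub>A\<^esub> (inv\<^bsub>A\<^esub> h a \<otimes>\<^bsub>A\<^esub> inv\<^bsub>A\<^esub> h b))
          = (h a \<otimes>\<^bsub>A\<^esub> inv\<^bsub>A\<^esub> h a) \<otimes>\<^bsub>A\<^esub> (h b \<otimes>\<^bsub>A\<^esub> inv\<^bsub>A\<^esub> h b)"
        if "a \<in> carrier G" "b \<in> carrier G" for a b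
        using that by (simp add: A.m_assoc A.m_lcomm[of "h b"])
      ultimately show ?thesis by (simp add: kernel_def m_assoc)
    qed (use exponent in \<open>auto simp: kernel_def h.hom_nat_pow\<close>)
  qed
qed

lemma hom_factors_through_ab_modp:
  assumes "comm_group A" "h \<in> hom G A" "\<forall>y\<in>carrier A. y [^]\<^bsub>A\<^esub> p = \<one>\<^bsub>A\<^esub>"
  obtains h' where "h' \<in> hom (ab_modp p G) A"
    "\<And>x. x \<in> carrier G \<Longrightarrow> h' (ab_modp_sub p G #> x) = h x"
proof -
  interpret h: group_hom G A h
    using assms by (simp add: group_hom_def group_hom_axioms_def comm_group.axioms(2) is_group)
  show ?thesis
    using h.FactGroup_universal_kernel[OF ab_modp_sub_normal ab_modp_sub_subset_kernel[OF assms]]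
      that
    unfolding ab_modp_def by blast
qed

end

section \<open>The surface group and its mod-p abelianization\<close>

context group
begin

lemma normal_closure_normal:
  assumes "S \<subseteq> carrier G"
  shows "normal_closure G S \<lhd> G"
  unfolding normal_closure_def
proof (rule normal_generateI)
  show "{inv x \<otimes> s \<otimes> x |x s. x \<in> carrier G \<and> s \<in> S} \<subseteq> carrier G" using assms by auto
next
  fix h g assume "h \<in> {inv x \<otimes> s \<otimes> x |x s. x \<in> carrier G \<and> s \<in> S}" and g: "g \<in> carrier G"
  then obtain x s where xs: "x \<in> carrier G" "s \<in> S" "h = inv x \<otimes> s \<otimes> x" by auto
  then have "g \<otimes> h \<otimes> inv g = inv (x \<otimes> inv g) \<otimes> s \<otimes> (x \<otimes> inv g)"
    using assms g by (auto simp: m_assoc inv_mult_group)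
  then show "g \<otimes> h \<otimes> inv g \<in> {inv x \<otimes> s \<otimes> x |x s. x \<in> carrier G \<and> s \<in> S}"
    using xs g by blast
qed

lemma hom_factors_through_normal_closure:
  assumes K: "group K" and h: "h \<in> hom G K" and S: "S \<subseteq> carrier G" and "\<forall>s\<in>S. h s = \<one>\<^bsub>K\<^esub>"
  obtains h' where "h' \<in> hom (G Mod normal_closure G S) K"
    "\<And>x. x \<in> carrier G \<Longrightarrow> h' (normal_closure G S #> x) = h x"
proof -
  interpret h: group_hom G K h by (simp add: group_hom_def group_hom_axioms_def h K is_group)
  have "normal_closure G S \<subseteq> kernel G K h"
    unfolding normal_closure_def
    by (rule generate_subgroup_incl[OF _ h.subgroup_kernel]) (use assms in \<open>auto simp: kernel_def\<close>)
  then show ?thesis using h.FactGroup_universal_kernel[OF normal_closure_normal[OF S]] that by blast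
qed

end

abbreviation surface_relations :: "nat \<Rightarrow> (nat \<times> bool) list set" where
  "surface_relations g \<equiv> normal_closure (free_grp (2*g)) {surface_relator g}"

definition comm_word :: "('a \<times> bool) list \<Rightarrow> ('a \<times> bool) list \<Rightarrow> ('a \<times> bool) list" where
  "comm_word u v = u @ v @ inv_word u @ inv_word v"

definition surface_modp_class :: "nat \<Rightarrow> nat \<Rightarrow> (nat \<times> bool) list \<Rightarrow> (nat \<times> bool) list set set" where
  "surface_modp_class p g w =
     ab_modp_sub p (surface_group g) #>\<^bsub>surface_group g\<^esub> (surface_relations g #>\<^bsub>free_grp (2*g)\<^esub> w)"

lemma surface_relator_eq:
  "surface_relator g = reduce_word (concat (map (\<lambda>i. comm_word (gen (2*i)) (gen (2*i+1))) [0..<g]))"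
  by (simp add: surface_relator_def comm_word_def gen_def inv_word_def inv_letter_def)

lemma surface_relator_closed: "surface_relator g \<in> carrier (free_grp (2*g))"
  unfolding surface_relator_def by (rule reduce_word_closed) auto

lemma exp_sum_surface_relator: "exp_sum (surface_relator g) k = 0"
proof -
  have "exp_sum (concat (map (\<lambda>i. comm_word (gen (2*i)) (gen (2*i+1))) xs)) k = 0" for xs
    by (induction xs) (simp_all add: comm_word_def)
  then show ?thesis by (simp add: surface_relator_eq)
qed

lemma surface_relations_normal: "surface_relations g \<lhd> free_grp (2*g)"
  using group.normal_closure_normal[OF free_grp_group] surface_relator_closed by blast

lemma surface_group_group: "group (surface_group g)"
  unfolding surface_group_def by (rule normal.factorgroup_is_group[OF surface_relations_normal])

lemma surface_ab_modp_comm_group: "comm_group (ab_modp p (surface_group g))"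
  by (rule group.ab_modp_comm_group[OF surface_group_group])

lemma surface_hom_factor:
  assumes "group K" "h \<in> hom (free_grp (2*g)) K" "h (surface_relator g) = \<one>\<^bsub>K\<^esub>"
  obtains h' where "h' \<in> hom (surface_group g) K"
    "\<And>w. w \<in> carrier (free_grp (2*g)) \<Longrightarrow> h' (surface_relations g #>\<^bsub>free_grp (2*g)\<^esub> w) = h w"
proof -
  obtain h' where "h' \<in> hom (free_grp (2*g) Mod surface_relations g) K"
    "\<And>w. w \<in> carrier (free_grp (2*g)) \<Longrightarrow> h' (surface_relations g #>\<^bsub>free_grp (2*g)\<^esub> w) = h w"
    by (rule group.hom_factors_through_normal_closure[OF free_grp_group assms(1,2),
                                                      where S = "{surface_relator g}"])
       (use surface_relator_closed assms(3) in auto)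
  then show ?thesis using that unfolding surface_group_def by blast
qed

lemma surface_modp_class_hom:
  "surface_modp_class p g \<in> hom (free_grp (2*g)) (ab_modp p (surface_group g))"
proof -
  have "(\<lambda>x. ab_modp_sub p (surface_group g) #>\<^bsub>surface_group g\<^esub> x)
          \<circ> (\<lambda>w. surface_relations g #>\<^bsub>free_grp (2*g)\<^esub> w)
        \<in> hom (free_grp (2*g)) (ab_modp p (surface_group g))"
    using normal.r_coset_hom_Mod[OF surface_relations_normal]
      normal.r_coset_hom_Mod[OF group.ab_modp_sub_normal[OF surface_group_group]]
    unfolding surface_group_def ab_modp_def by (rule hom_compose)
  then show ?thesis by (simp add: comp_def surface_modp_class_def[abs_def])
qed

lemma surface_modp_class_surj:
  assumes "C \<in> carrier (ab_modp p (surface_group g))"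
  obtains w where "w \<in> carrier (free_grp (2*g))" "C = surface_modp_class p g w"
  using assms unfolding ab_modp_def surface_modp_class_def carrier_FactGroup
  by (auto simp: surface_group_def carrier_FactGroup)

lemma mem_surface_modp_class:
  assumes "w \<in> carrier (free_grp (2*g))"
  shows "surface_relations g #>\<^bsub>free_grp (2*g)\<^esub> w \<in> surface_modp_class p g w"
proof -
  interpret S: group "surface_group g" by (rule surface_group_group)
  interpret K: normal "ab_modp_sub p (surface_group g)" "surface_group g"
    by (rule S.ab_modp_sub_normal)
  have "surface_relations g #>\<^bsub>free_grp (2*g)\<^esub> w \<in> carrier (surface_group g)"
    using assms by (auto simp: surface_group_def carrier_FactGroup)
  then show ?thesis unfolding surface_modp_class_def using S.rcos_self K.subgroup_axioms by blast
qed

lemma exp_sum_mod_hom: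
  assumes "p > 0"
  shows "(\<lambda>w. exp_sum w k mod int p) \<in> hom (free_grp n) (integer_mod_group p)"
  using assms by (intro homI) (auto simp: carrier_integer_mod_group free_grp_mult mod_add_eq)

lemma surface_modp_class_eq_iff:
  assumes p: "p > 0" and w: "w \<in> carrier (free_grp (2*g))" and w': "w' \<in> carrier (free_grp (2*g))"
  shows "surface_modp_class p g w = surface_modp_class p g w'
           \<longleftrightarrow> (\<forall>k<2*g. [exp_sum w k = exp_sum w' k] (mod int p))"
proof
  assume eq: "surface_modp_class p g w = surface_modp_class p g w'"
  show "\<forall>k<2*g. [exp_sum w k = exp_sum w' k] (mod int p)"
  proof (intro allI impI)
    fix k
    let ?Z = "integer_mod_group p"
    have exponent: "\<forall>y\<in>carrier ?Z. y [^]\<^bsub>?Z\<^esub> p = \<one>\<^bsub>?Z\<^esub>" by simp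
    obtain \<psi> where \<psi>: "\<psi> \<in> hom (surface_group g) ?Z"
      "\<And>w. w \<in> carrier (free_grp (2*g)) \<Longrightarrow>
              \<psi> (surface_relations g #>\<^bsub>free_grp (2*g)\<^esub> w) = exp_sum w k mod int p"
      by (rule surface_hom_factor[where g = g, OF group_integer_mod_group exp_sum_mod_hom[OF p]])
         (auto simp: exp_sum_surface_relator)
    obtain \<chi> where \<chi>: "\<chi> \<in> hom (ab_modp p (surface_group g)) ?Z"
      "\<And>x. x \<in> carrier (surface_group g) \<Longrightarrow>
              \<chi> (ab_modp_sub p (surface_group g) #>\<^bsub>surface_group g\<^esub> x) = \<psi> x"
      by (rule group.hom_factors_through_ab_modp[OF surface_group_group abelian_integer_mod_group
                                                   \<psi>(1) exponent])
         auto
    have "\<chi> (surface_modp_class p g v) = exp_sum v k mod int p"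
      if "v \<in> carrier (free_grp (2*g))" for v
      using that \<chi>(2) \<psi>(2) by (simp add: surface_modp_class_def surface_group_def carrier_FactGroup)
    then show "[exp_sum w k = exp_sum w' k] (mod int p)"
      using eq w w' by (metis cong_def)
  qed
next
  assume "\<forall>k<2*g. [exp_sum w k = exp_sum w' k] (mod int p)"
  then show "surface_modp_class p g w = surface_modp_class p g w'"
  proof (intro free_hom_eq_if_exp_sum_cong[OF _ surface_modp_class_hom _ w w'])
    show "comm_group (ab_modp p (surface_group g))" by (rule surface_ab_modp_comm_group)
    show "\<forall>k<2*g. surface_modp_class p g (gen k) [^]\<^bsub>ab_modp p (surface_group g)\<^esub> p
                   = \<one>\<^bsub>ab_modp p (surface_group g)\<^esub>"
      using group.ab_modp_pow_eq_one[OF surface_group_group]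
        hom_in_carrier[OF surface_modp_class_hom]
        gen_closed by blast
  qed
qed

definition surface_epi_subst :: "nat \<Rightarrow> nat \<Rightarrow> (nat \<Rightarrow> (nat \<times> bool) list) \<Rightarrow> bool" where
  "surface_epi_subst g r f \<longleftrightarrow>
     (\<forall>k. reduced (f k)) \<and> (\<forall>k<2*g. f k \<in> carrier (free_grp r)) \<and>
     free_subst f (surface_relator g) = [] \<and> (\<forall>k<r. \<exists>j<2*g. f j = gen k)"

lemma surface_epi_subst_epi:
  assumes "surface_epi_subst g r f"
  obtains q where "q \<in> hom (surface_group g) (free_grp r)"
    "q ` carrier (surface_group g) = carrier (free_grp r)"
    "\<And>w. w \<in> carrier (free_grp (2*g)) \<Longrightarrow> q (surface_relations g #>\<^bsub>free_grp (2*g)\<^esub> w) = free_subst f w"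
proof -
  interpret R: group "free_grp r" by (rule free_grp_group)
  have f: "\<forall>k. reduced (f k)" "\<forall>k<2*g. f k \<in> carrier (free_grp r)"
      "free_subst f (surface_relator g) = []" "\<forall>k<r. \<exists>j<2*g. f j = gen k"
    using assms by (auto simp: surface_epi_subst_def)
  obtain q where q: "q \<in> hom (surface_group g) (free_grp r)"
    "\<And>w. w \<in> carrier (free_grp (2*g)) \<Longrightarrow> q (surface_relations g #>\<^bsub>free_grp (2*g)\<^esub> w) = free_subst f w"
    by (rule surface_hom_factor[OF R.is_group free_subst_hom[OF f(2,1)]])
       (auto simp: f(3) free_grp_one)
  interpret q: group_hom "surface_group g" "free_grp r" q
    by (simp add: group_hom_def group_hom_axioms_def q(1) surface_group_group R.is_group)
  have "gen ` {..<r} \<subseteq> q ` carrier (surface_group g)"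
  proof
    fix y assume "y \<in> gen ` {..<r}"
    then obtain j where j: "j < 2*g" "f j = y" using f(4) by blast
    have "surface_relations g #>\<^bsub>free_grp (2*g)\<^esub> gen j \<in> carrier (surface_group g)"
      using gen_closed[OF j(1)] by (auto simp: surface_group_def carrier_FactGroup)
    moreover have "q (surface_relations g #>\<^bsub>free_grp (2*g)\<^esub> gen j) = y"
      using q(2)[OF gen_closed[OF j(1)]] free_subst_gen[OF f(1)] j(2) by simp
    ultimately show "y \<in> q ` carrier (surface_group g)" by force
  qed
  then have "carrier (free_grp r) \<subseteq> q ` carrier (surface_group g)"
    using R.generate_subgroup_incl[OF _ q.img_is_subgroup] free_grp_generate_gen by blast
  then have "q ` carrier (surface_group g) = carrier (free_grp r)"
    using q.hom_closed by blast
  then show ?thesis using that q by blast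
qed

lemma free_subst_surface_relator:
  assumes "\<forall>k. reduced (f k)"
  shows "free_subst f (surface_relator g)
           = reduce_word (concat (map (\<lambda>i. reduce_word (comm_word (f (2*i)) (f (2*i+1)))) [0..<g]))"
proof -
  have "concat (map (letter_subst f) (concat (map (\<lambda>i. comm_word (gen (2*i)) (gen (2*i+1))) xs)))
          = concat (map (\<lambda>i. comm_word (f (2*i)) (f (2*i+1))) xs)" for xs
    by (induction xs)
       (simp_all add: comm_word_def gen_def inv_word_def inv_letter_def letter_subst_def)
  then show ?thesis
    unfolding surface_relator_eq free_subst_reduce_word[OF assms]
    by (simp add: free_subst_def flip: reduce_word_concat_map)
qed

lemma reduce_comm_word_trivial:
  "reduced u \<Longrightarrow> reduced v \<Longrightarrow> u = [] \<or> v = [] \<Longrightarrow> reduce_word (comm_word u v) = []"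
  using reduce_word_append_inv_word by (auto simp: comm_word_def inv_word_def)

lemma exp_sum_free_subst_gens:
  assumes "w \<in> carrier (free_grp m)" and "\<forall>j. f j \<in> insert [] (range gen)"
  shows "exp_sum (free_subst f w) k = (\<Sum>j | j < m \<and> f j = gen k. exp_sum w j)"
proof -
  have "exp_sum w j * exp_sum (f j) k = (if f j = gen k then exp_sum w j else 0)" for j
    using assms(2)[rule_format, of j] by (auto simp: exp_sum_gen gen_eq_iff)
  then have "exp_sum (free_subst f w) k = (\<Sum>j<m. if f j = gen k then exp_sum w j else 0)"
    by (simp only: exp_sum_free_subst[OF assms(1)])
  also have "\<dots> = (\<Sum>j | j < m \<and> f j = gen k. exp_sum w j)"
    by (simp add: sum.inter_filter[symmetric] lessThan_def conj_commute)
  finally show ?thesis .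
qed

definition select_gens :: "nat \<Rightarrow> nat \<Rightarrow> nat \<Rightarrow> (nat \<times> bool) list" where
  "select_gens c d j = (if j = c then gen 0 else if j = d then gen 1 else [])"

definition twist_handles :: "nat \<Rightarrow> nat \<Rightarrow> nat \<Rightarrow> (nat \<times> bool) list" where
  "twist_handles i i' j =
     (if j = 2*i then gen 0 else if j = 2*i+1 then gen 1
      else if j = 2*i' then gen 1 else if j = 2*i'+1 then gen 0 else [])"

lemma free_subst_select_gens_surface_relator:
  assumes "c div 2 \<noteq> d div 2"
  shows "free_subst (select_gens c d) (surface_relator g) = []"
proof -
  have blocks: "(\<lambda>i. reduce_word (comm_word (select_gens c d (2*i)) (select_gens c d (2*i+1))))
                = (\<lambda>i. [])"
    using assms by (intro ext reduce_comm_word_trivial) (auto simp: select_gens_def gen_def)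
  have reduced: "\<forall>k. reduced (select_gens c d k)" by (simp add: select_gens_def gen_def)
  show ?thesis unfolding free_subst_surface_relator[OF reduced] blocks
    by (simp add: map_replicate_const reduce_word_def)
qed

lemma select_gens_surface_epi_subst_1:
  assumes "c < 2*g"
  shows "surface_epi_subst g 1 (select_gens c (2*g))"
proof -
  have "\<forall>k<1. \<exists>j<2*g. select_gens c (2*g) j = gen k"
    using assms by (intro allI impI exI[of _ c]) (simp add: select_gens_def)
  moreover have "c div 2 \<noteq> 2*g div 2" using assms by simp
  ultimately show ?thesis
    using free_subst_select_gens_surface_relator
    by (auto simp: surface_epi_subst_def select_gens_def gen_def free_grp_carrier_iff)
qed

lemma select_gens_surface_epi_subst_2:
  assumes "c < 2*g" "d < 2*g" "c div 2 \<noteq> d div 2"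
  shows "surface_epi_subst g 2 (select_gens c d)"
proof -
  have "select_gens c d c = gen 0" "select_gens c d d = gen 1"
    using assms(3) by (auto simp: select_gens_def)
  then have "\<forall>k<2. \<exists>j<2*g. select_gens c d j = gen k"
    using assms(1,2) by (auto simp: less_2_cases_iff)
  then show ?thesis
    using free_subst_select_gens_surface_relator[OF assms(3)]
    by (auto simp: surface_epi_subst_def select_gens_def gen_def free_grp_carrier_iff)
qed

lemma exp_sum_free_subst_select_gens:
  assumes "w \<in> carrier (free_grp m)" "c < m" "c \<noteq> d"
  shows "exp_sum (free_subst (select_gens c d) w) 0 = exp_sum w c"
    and "d < m \<Longrightarrow> exp_sum (free_subst (select_gens c d) w) 1 = exp_sum w d"
proof -
  have gens: "\<forall>j. select_gens c d j \<in> insert [] (range gen)"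
    by (simp add: select_gens_def)
  have "{j. j < m \<and> select_gens c d j = gen 0} = {c}"
    using assms by (auto simp: select_gens_def gen_def)
  then show "exp_sum (free_subst (select_gens c d) w) 0 = exp_sum w c"
    by (simp add: exp_sum_free_subst_gens[OF assms(1) gens])
  assume "d < m"
  then have "{j. j < m \<and> select_gens c d j = gen 1} = {d}"
    using assms by (auto simp: select_gens_def gen_def)
  then show "exp_sum (free_subst (select_gens c d) w) 1 = exp_sum w d"
    by (simp add: exp_sum_free_subst_gens[OF assms(1) gens])
qed

lemma concat_map_upt_two_blocks:
  assumes "a < b" "\<forall>z. z \<noteq> a \<and> z \<noteq> b \<longrightarrow> B z = []"
  shows "concat (map B [0..<n]) = (if a < n then B a else []) @ (if b < n then B b else [])"
  using assms by (induction n) (auto simp: less_Suc_eq)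

lemma free_subst_twist_handles_surface_relator:
  assumes "i \<noteq> i'" "i < g" "i' < g"
  shows "free_subst (twist_handles i i') (surface_relator g) = []"
proof -
  let ?B = "\<lambda>z. reduce_word (comm_word (twist_handles i i' (2*z)) (twist_handles i i' (2*z+1)))"
  have others: "\<forall>z. z \<noteq> i \<and> z \<noteq> i' \<longrightarrow> ?B z = []"
    by (auto simp: twist_handles_def comm_word_def reduce_word_def inv_word_def)
  have Bi: "?B i = comm_word (gen 0) (gen 1)" and Bi': "?B i' = comm_word (gen 1) (gen 0)"
    using assms(1) by (simp_all add: twist_handles_def gen_def comm_word_def inv_word_def
                                    inv_letter_def reduce_word_def)
  have cancel: "reduce_word (comm_word (gen 0) (gen 1) @ comm_word (gen 1) (gen 0)) = []"
    "reduce_word (comm_word (gen 1) (gen 0) @ comm_word (gen 0) (gen 1)) = []"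
    by (simp_all add: gen_def comm_word_def inv_word_def inv_letter_def reduce_word_def)
  have "reduce_word (concat (map ?B [0..<g])) = []"
  proof (cases "i < i'")
    case True
    then show ?thesis using concat_map_upt_two_blocks[OF True others] assms Bi Bi' cancel by simp
  next
    case False
    then have "i' < i" using assms(1) by simp
    moreover have "\<forall>z. z \<noteq> i' \<and> z \<noteq> i \<longrightarrow> ?B z = []" using others by blast
    ultimately show ?thesis using concat_map_upt_two_blocks[of i' i ?B] assms Bi Bi' cancel by simp
  qed
  moreover have "\<forall>k. reduced (twist_handles i i' k)" by (simp add: twist_handles_def gen_def)
  ultimately show ?thesis by (simp add: free_subst_surface_relator)
qed

lemma twist_handles_surface_epi_subst:
  assumes "i \<noteq> i'" "i < g" "i' < g"
  shows "surface_epi_subst g 2 (twist_handles i i')"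
proof -
  have "twist_handles i i' (2*i) = gen 0" "twist_handles i i' (2*i+1) = gen 1"
    by (simp_all add: twist_handles_def)
  then have "\<forall>k<2. \<exists>j<2*g. twist_handles i i' j = gen k"
    using assms(2) by (auto simp: less_2_cases_iff intro: exI[of _ "2*i"] exI[of _ "2*i+1"])
  then show ?thesis
    using free_subst_twist_handles_surface_relator[OF assms]
    by (auto simp: surface_epi_subst_def twist_handles_def gen_def free_grp_carrier_iff)
qed

lemma exp_sum_free_subst_twist_handles:
  assumes "w \<in> carrier (free_grp (2*g))" "i \<noteq> i'" "i < g" "i' < g"
  shows "exp_sum (free_subst (twist_handles i i') w) 0 = exp_sum w (2*i) + exp_sum w (2*i'+1)"
    and "exp_sum (free_subst (twist_handles i i') w) 1 = exp_sum w (2*i+1) + exp_sum w (2*i')"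
proof -
  have gens: "\<forall>j. twist_handles i i' j \<in> insert [] (range gen)"
    by (simp add: twist_handles_def)
  have "twist_handles i i' j = gen k \<longleftrightarrow>
          (k = 0 \<and> (j = 2*i \<or> j = 2*i'+1)) \<or> (k = 1 \<and> (j = 2*i+1 \<or> j = 2*i'))" for j k
    using assms(2) by (auto simp: twist_handles_def gen_eq_iff) (auto simp: gen_def)
  then have "{j. j < 2*g \<and> twist_handles i i' j = gen 0} = {2*i, 2*i'+1}"
    "{j. j < 2*g \<and> twist_handles i i' j = gen 1} = {2*i+1, 2*i'}"
    using assms(3,4) by auto
  moreover have "2*i \<noteq> 2*i'+1" "2*i+1 \<noteq> 2*i'" by presburger+
  ultimately show
    "exp_sum (free_subst (twist_handles i i') w) 0 = exp_sum w (2*i) + exp_sum w (2*i'+1)"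
    "exp_sum (free_subst (twist_handles i i') w) 1 = exp_sum w (2*i+1) + exp_sum w (2*i')"
    by (simp_all add: exp_sum_free_subst_gens[OF assms(1) gens])
qed

section \<open>Minors modulo a prime and subgroups of rank one and two\<close>

definition minor2 :: "(nat \<Rightarrow> int) \<Rightarrow> (nat \<Rightarrow> int) \<Rightarrow> nat \<Rightarrow> nat \<Rightarrow> int" where
  "minor2 x y j k = x j * y k - x k * y j"

lemma int_prime_dvd_mult_iff: "Factorial_Ring.prime p \<Longrightarrow> int p dvd a * b \<longleftrightarrow> int p dvd a \<or> int p dvd b"
  by (simp add: prime_dvd_mult_iff)

lemma cong_inverse_mod_prime:
  assumes "Factorial_Ring.prime p" "\<not> int p dvd a"
  obtains u where "[a * u = 1] (mod int p)"
proof -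
  have "coprime a (int p)"
    using assms prime_imp_coprime[of "int p" a] by (simp add: coprime_commute)
  then show ?thesis using cong_solve_coprime_int that by blast
qed

lemma proportional_mod_prime_if_minors_dvd:
  assumes "Factorial_Ring.prime p" "\<not> int p dvd x c" "\<forall>k\<in>K. int p dvd minor2 x y c k"
  obtains s where "\<forall>k\<in>K. [y k = s * x k] (mod int p)"
proof -
  obtain u where u: "[x c * u = 1] (mod int p)" using cong_inverse_mod_prime[OF assms(1,2)] .
  have "[y k = (y c * u) * x k] (mod int p)" if k: "k \<in> K" for k
  proof -
    have "x c * (y k - y c * u * x k) = minor2 x y c k - x k * y c * (x c * u - 1)"
      by (simp add: minor2_def algebra_simps)
    moreover have "int p dvd x c * u - 1" using u by (simp add: cong_iff_dvd_diff)
    ultimately have "int p dvd x c * (y k - y c * u * x k)" using assms(3) k by simp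
    then show ?thesis using assms(1,2) by (simp add: int_prime_dvd_mult_iff cong_iff_dvd_diff)
  qed
  then show ?thesis using that by blast
qed

lemma dvd_column_if_minors_dvd:
  assumes "Factorial_Ring.prime p" "\<not> int p dvd minor2 x y j k"
    and "int p dvd minor2 x y c j" "int p dvd minor2 x y c k"
  shows "int p dvd x c" and "int p dvd y c"
proof -
  have "x c * minor2 x y j k = x j * minor2 x y c k - x k * minor2 x y c j"
    "y c * minor2 x y j k = y j * minor2 x y c k - y k * minor2 x y c j"
    by (simp_all add: minor2_def algebra_simps)
  then have "int p dvd x c * minor2 x y j k" "int p dvd y c * minor2 x y j k"
    using assms(3,4) by simp_all
  then show "int p dvd x c" and "int p dvd y c"
    using assms(1,2) by (simp_all add: int_prime_dvd_mult_iff)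
qed

lemma solve_2x2_mod_prime:
  assumes "Factorial_Ring.prime p" "\<not> int p dvd minor2 x y 0 1"
  shows "\<exists>a b. \<forall>k<2. [a * x k + b * y k = t k] (mod int p)"
proof -
  obtain u where u: "[minor2 x y 0 1 * u = 1] (mod int p)"
    using cong_inverse_mod_prime[OF assms] .
  define a where "a = u * (t 0 * y 1 - t 1 * y 0)"
  define b where "b = u * (t 1 * x 0 - t 0 * x 1)"
  have "a * x k + b * y k = t k * (minor2 x y 0 1 * u)" if "k < 2" for k
    using that by (auto simp: a_def b_def minor2_def algebra_simps less_2_cases_iff)
  then have "[a * x k + b * y k = t k] (mod int p)" if "k < 2" for k
    using that cong_scalar_left[OF u, of "t k"] by simp
  then show ?thesis by blast
qed

lemma subgroup_rank_le_card:
  "S \<subseteq> H \<Longrightarrow> finite S \<Longrightarrow> generate G S = H \<Longrightarrow> subgroup_rank G H \<le> card S"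
  unfolding subgroup_rank_def by (rule Least_le) blast

lemma surface_subgroup_rank_ge_1:
  assumes "p > 0" and H: "subgroup H (ab_modp p (surface_group g))"
    and rank: "subgroup_rank (ab_modp p (surface_group g)) H \<ge> 1"
  obtains w c where "w \<in> carrier (free_grp (2*g))" "surface_modp_class p g w \<in> H"
    "c < 2*g" "\<not> int p dvd exp_sum w c"
proof -
  let ?A = "ab_modp p (surface_group g)"
  interpret A: comm_group ?A by (rule surface_ab_modp_comm_group)
  have "H \<noteq> {\<one>\<^bsub>?A\<^esub>}"
  proof
    assume "H = {\<one>\<^bsub>?A\<^esub>}"
    then have "subgroup_rank ?A H \<le> card {}"
      using subgroup_rank_le_card[of "{}" H ?A] A.generate_empty by simp
    then show False using rank by simp
  qed
  then obtain C where C: "C \<in> H" "C \<noteq> \<one>\<^bsub>?A\<^esub>" using subgroup.one_closed[OF H] by blast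
  then obtain w where w: "w \<in> carrier (free_grp (2*g))" "C = surface_modp_class p g w"
    using surface_modp_class_surj subgroup.mem_carrier[OF H] by metis
  have "surface_modp_class p g [] = \<one>\<^bsub>?A\<^esub>"
    using hom_one[OF surface_modp_class_hom free_grp_group A.is_group] by (simp add: free_grp_one)
  then have "\<not> (\<forall>k<2*g. [exp_sum w k = exp_sum [] k] (mod int p))"
    using surface_modp_class_eq_iff[OF assms(1) w(1), of "[]"] C w(2)
    by (simp add: free_grp_carrier_iff)
  then show ?thesis using that w C by (auto simp: cong_0_iff)
qed

lemma surface_subgroup_rank_ge_2:
  assumes p: "Factorial_Ring.prime p" and H: "subgroup H (ab_modp p (surface_group g))"
    and rank: "subgroup_rank (ab_modp p (surface_group g)) H \<ge> 2"
  obtains u\<^sub>1 u\<^sub>2 j k where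
    "u\<^sub>1 \<in> carrier (free_grp (2*g))" "surface_modp_class p g u\<^sub>1 \<in> H"
    "u\<^sub>2 \<in> carrier (free_grp (2*g))" "surface_modp_class p g u\<^sub>2 \<in> H"
    "j < 2*g" "k < 2*g" "\<not> int p dvd minor2 (exp_sum u\<^sub>1) (exp_sum u\<^sub>2) j k"
proof -
  let ?A = "ab_modp p (surface_group g)" and ?F = "free_grp (2*g)" and ?cl = "surface_modp_class p g"
  interpret A: comm_group ?A by (rule surface_ab_modp_comm_group)
  have p0: "p > 0" using p prime_gt_0_nat by blast
  obtain w c where w: "w \<in> carrier ?F" "?cl w \<in> H" and c: "c < 2*g" "\<not> int p dvd exp_sum w c"
    using surface_subgroup_rank_ge_1[OF p0 H] rank by auto
  note witnesses = that
  show ?thesis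
  proof (rule ccontr)
    assume "\<not> thesis"
    then have minors: "int p dvd minor2 (exp_sum w) (exp_sum u) c k"
      if "u \<in> carrier ?F" "?cl u \<in> H" "k < 2*g" for u k
      using \<open>\<not> thesis\<close> witnesses[of w u c k] w c(1) that by blast
    have "H \<subseteq> generate ?A {?cl w}"
    proof
      fix C assume "C \<in> H"
      then obtain u where u: "u \<in> carrier ?F" "C = ?cl u"
        using surface_modp_class_surj subgroup.mem_carrier[OF H] by metis
      obtain s where s: "\<forall>k\<in>{..<2*g}. [exp_sum u k = s * exp_sum w k] (mod int p)"
        using proportional_mod_prime_if_minors_dvd[where x = "exp_sum w" and c = c and K = "{..<2*g}"
                and y = "exp_sum u", OF p c(2)] minors u \<open>C \<in> H\<close> by blast
      have "?cl u = ?cl (w [^]\<^bsub>?F\<^esub> s)"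
        using s u(1) w(1) by (simp add: surface_modp_class_eq_iff[OF p0] exp_sum_int_pow
                                       group.int_pow_closed[OF free_grp_group])
      also have "\<dots> = ?cl w [^]\<^bsub>?A\<^esub> s"
        by (rule hom_int_pow[OF surface_modp_class_hom w(1) free_grp_group A.is_group])
      finally show "C \<in> generate ?A {?cl w}"
        using u(2) A.generate_pow hom_in_carrier[OF surface_modp_class_hom w(1)] by blast
    qed
    moreover have "generate ?A {?cl w} \<subseteq> H"
      using A.generate_subgroup_incl[OF _ H] w(2) by blast
    ultimately have "subgroup_rank ?A H \<le> card {?cl w}"
      using subgroup_rank_le_card[of "{?cl w}" H ?A] w(2) by blast
    then show False using rank by simp
  qed
qed

lemma surface_epi_subst_hom:
  "surface_epi_subst g r f \<Longrightarrow> free_subst f \<in> hom (free_grp (2*g)) (free_grp r)"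
  by (rule free_subst_hom) (auto simp: surface_epi_subst_def)

lemma surface_lift_covers:
  assumes f: "free_subst f \<in> hom (free_grp (2*g)) (free_grp r)"
    and H: "subgroup H (ab_modp p (surface_group g))"
    and u\<^sub>1: "u\<^sub>1 \<in> carrier (free_grp (2*g))" "surface_modp_class p g u\<^sub>1 \<in> H"
    and u\<^sub>2: "u\<^sub>2 \<in> carrier (free_grp (2*g))" "surface_modp_class p g u\<^sub>2 \<in> H"
    and solvable: "\<forall>t. \<exists>a b. \<forall>k<r.
      [a * exp_sum (free_subst f u\<^sub>1) k + b * exp_sum (free_subst f u\<^sub>2) k = t k] (mod int p)"
  shows "\<forall>t. \<exists>w\<in>carrier (free_grp (2*g)). surface_modp_class p g w \<in> H \<and>
           (\<forall>k<r. [exp_sum (free_subst f w) k = t k] (mod int p))"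
proof
  fix t :: "nat \<Rightarrow> int"
  let ?A = "ab_modp p (surface_group g)" and ?F = "free_grp (2*g)" and ?cl = "surface_modp_class p g"
  interpret A: comm_group ?A by (rule surface_ab_modp_comm_group)
  interpret F: group ?F by (rule free_grp_group)
  interpret cl: group_hom ?F ?A ?cl
    by (simp add: group_hom_def group_hom_axioms_def surface_modp_class_hom A.is_group F.is_group)
  interpret f: group_hom ?F "free_grp r" "free_subst f"
    by (simp add: group_hom_def group_hom_axioms_def f free_grp_group)
  obtain a b where ab: "\<forall>k<r.
      [a * exp_sum (free_subst f u\<^sub>1) k + b * exp_sum (free_subst f u\<^sub>2) k = t k] (mod int p)"
    using solvable by blast
  let ?w = "u\<^sub>1 [^]\<^bsub>?F\<^esub> a \<otimes>\<^bsub>?F\<^esub> u\<^sub>2 [^]\<^bsub>?F\<^esub> b"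
  have w: "?w \<in> carrier ?F" using u\<^sub>1 u\<^sub>2 by simp
  have "?cl ?w = ?cl u\<^sub>1 [^]\<^bsub>?A\<^esub> a \<otimes>\<^bsub>?A\<^esub> ?cl u\<^sub>2 [^]\<^bsub>?A\<^esub> b"
    using u\<^sub>1 u\<^sub>2 by (simp add: cl.hom_int_pow)
  then have "?cl ?w \<in> H"
    using u\<^sub>1 u\<^sub>2 A.subgroup_int_pow_closed[OF H] subgroup.m_closed[OF H] by simp
  moreover have "exp_sum (free_subst f ?w) k
      = a * exp_sum (free_subst f u\<^sub>1) k + b * exp_sum (free_subst f u\<^sub>2) k" for k
    using u\<^sub>1 u\<^sub>2 f.hom_closed by (simp add: f.hom_mult f.hom_int_pow exp_sum_int_pow exp_sum_mult)
  ultimately show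
    "\<exists>w\<in>carrier ?F. ?cl w \<in> H \<and> (\<forall>k<r. [exp_sum (free_subst f w) k = t k] (mod int p))"
    using w ab by auto
qed

lemma surface_epi_onto_ab_modp:
  assumes f: "surface_epi_subst g r f" and p: "p > 0"
    and covers: "\<forall>t. \<exists>w\<in>carrier (free_grp (2*g)). surface_modp_class p g w \<in> H \<and>
                   (\<forall>k<r. [exp_sum (free_subst f w) k = t k] (mod int p))"
  shows "\<exists>q. q \<in> hom (surface_group g) (free_grp r)
           \<and> q ` carrier (surface_group g) = carrier (free_grp r)
           \<and> (\<forall>y \<in> carrier (ab_modp p (free_grp r)).
                \<exists>h \<in> H. \<exists>x \<in> h. y = ab_modp_sub p (free_grp r) #>\<^bsub>free_grp r\<^esub> q x)"
proof -
  let ?R = "free_grp r" and ?F = "free_grp (2*g)"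
  let ?K = "ab_modp_sub p ?R"
  interpret R: group ?R by (rule free_grp_group)
  interpret K: normal ?K ?R by (rule R.ab_modp_sub_normal)
  obtain q where q: "q \<in> hom (surface_group g) ?R" "q ` carrier (surface_group g) = carrier ?R"
    "\<And>w. w \<in> carrier ?F \<Longrightarrow> q (surface_relations g #>\<^bsub>?F\<^esub> w) = free_subst f w"
    using surface_epi_subst_epi[OF f] by blast
  have "\<exists>h \<in> H. \<exists>x \<in> h. y = ?K #>\<^bsub>?R\<^esub> q x" if y: "y \<in> carrier (ab_modp p ?R)" for y
  proof -
    obtain v where v: "v \<in> carrier ?R" "y = ?K #>\<^bsub>?R\<^esub> v"
      using y unfolding ab_modp_def carrier_FactGroup by blast
    obtain w where w: "w \<in> carrier ?F" "surface_modp_class p g w \<in> H"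
      "\<forall>k<r. [exp_sum (free_subst f w) k = exp_sum v k] (mod int p)"
      using covers by blast
    have "?K #>\<^bsub>?R\<^esub> free_subst f w = ?K #>\<^bsub>?R\<^esub> v"
    proof (rule free_hom_eq_if_exp_sum_cong[where p = p])
      show "comm_group (?R Mod ?K)" using R.ab_modp_comm_group unfolding ab_modp_def .
      show "(\<lambda>x. ?K #>\<^bsub>?R\<^esub> x) \<in> hom ?R (?R Mod ?K)" by (rule K.r_coset_hom_Mod)
      show "\<forall>k<r. (?K #>\<^bsub>?R\<^esub> gen k) [^]\<^bsub>?R Mod ?K\<^esub> p = \<one>\<^bsub>?R Mod ?K\<^esub>"
        using R.ab_modp_pow_eq_one hom_in_carrier[OF K.r_coset_hom_Mod gen_closed]
        unfolding ab_modp_def by blast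
      show "free_subst f w \<in> carrier ?R"
        using hom_in_carrier[OF surface_epi_subst_hom[OF f] w(1)] .
    qed (use v w in auto)
    then show ?thesis
      using mem_surface_modp_class[OF w(1)] q(3)[OF w(1)] w(2) v(2) by metis
  qed
  then show ?thesis using q(1,2) by blast
qed

lemma minor2_twist_dvd:
  assumes "int p dvd x a'" "int p dvd x b'" "int p dvd y a'" "int p dvd y b'"
    and "x' 0 = x a + x b'" "x' 1 = x b + x a'" "y' 0 = y a + y b'" "y' 1 = y b + y a'"
  shows "int p dvd minor2 x' y' 0 1 - minor2 x y a b"
proof -
  have eq: "minor2 x' y' 0 1 - minor2 x y a b
      = x a * y a' + x b' * (y b + y a') - x b * y b' - x a' * (y a + y b')"
    using assms(5-8) by (simp add: minor2_def algebra_simps)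
  have "int p dvd x a * y a'" "int p dvd x b' * (y b + y a')"
    "int p dvd x b * y b'" "int p dvd x a' * (y a + y b')"
    using assms(1-4) by (simp_all add: dvd_mult dvd_mult2)
  then show ?thesis unfolding eq by (intro dvd_diff dvd_add)
qed

lemma twist_handles_minor:
  assumes p: "Factorial_Ring.prime p" and g: "g \<ge> 2"
    and u\<^sub>1: "u\<^sub>1 \<in> carrier (free_grp (2*g))" and u\<^sub>2: "u\<^sub>2 \<in> carrier (free_grp (2*g))"
    and jk: "j < 2*g" "k < 2*g" and minor: "\<not> int p dvd minor2 (exp_sum u\<^sub>1) (exp_sum u\<^sub>2) j k"
    and across: "\<forall>a<2*g. \<forall>b<2*g. a div 2 \<noteq> b div 2 \<longrightarrow>
                   int p dvd minor2 (exp_sum u\<^sub>1) (exp_sum u\<^sub>2) a b"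
  obtains i i' where "i \<noteq> i'" "i < g" "i' < g"
    "\<not> int p dvd minor2 (exp_sum (free_subst (twist_handles i i') u\<^sub>1))
                       (exp_sum (free_subst (twist_handles i i') u\<^sub>2)) 0 1"
proof -
  let ?x = "exp_sum u\<^sub>1" and ?y = "exp_sum u\<^sub>2"
  define i where "i = j div 2"
  define i' where "i' = (if i = 0 then 1 else (0::nat))"
  have k: "k div 2 = i"
  proof (rule ccontr)
    assume "k div 2 \<noteq> i"
    then have "int p dvd minor2 ?x ?y j k" using across jk unfolding i_def by auto
    then show False using minor by blast
  qed
  have "j \<noteq> k" using minor by (auto simp: minor2_def)
  then have "(j = 2*i \<and> k = 2*i+1) \<or> (j = 2*i+1 \<and> k = 2*i)" using k unfolding i_def by presburger
  then have minor_i: "\<not> int p dvd minor2 ?x ?y (2*i) (2*i+1)"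
    using minor by (auto simp: minor2_def dvd_diff_commute)
  have i: "i \<noteq> i'" "i < g" "i' < g" using jk(1) g by (auto simp: i_def i'_def)
  have column: "int p dvd ?x c \<and> int p dvd ?y c" if "c div 2 = i'" "c < 2*g" for c
  proof -
    have "int p dvd minor2 ?x ?y c j" "int p dvd minor2 ?x ?y c k"
      using across that jk k i(1) unfolding i_def by auto
    then show ?thesis using dvd_column_if_minors_dvd[OF p minor] by blast
  qed
  have "int p dvd ?x (2*i')" "int p dvd ?y (2*i')"
    "int p dvd ?x (2*i'+1)" "int p dvd ?y (2*i'+1)"
    using column[of "2*i'"] column[of "2*i'+1"] i by auto
  then have close: "int p dvd minor2 (exp_sum (free_subst (twist_handles i i') u\<^sub>1))
                                (exp_sum (free_subst (twist_handles i i') u\<^sub>2)) 0 1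
                      - minor2 ?x ?y (2*i) (2*i+1)" (is "int p dvd ?D - ?M")
    using minor2_twist_dvd exp_sum_free_subst_twist_handles[OF u\<^sub>1 i]
      exp_sum_free_subst_twist_handles[OF u\<^sub>2 i] by blast
  have "\<not> int p dvd ?D"
  proof
    assume "int p dvd ?D"
    then have "int p dvd ?D - (?D - ?M)" using close by (rule dvd_diff)
    then show False using minor_i by simp
  qed
  then show ?thesis using that i by blast
qed

lemma exists_surface_epi_subst_2:
  assumes p: "Factorial_Ring.prime p" and g: "g \<ge> 2"
    and u\<^sub>1: "u\<^sub>1 \<in> carrier (free_grp (2*g))" and u\<^sub>2: "u\<^sub>2 \<in> carrier (free_grp (2*g))"
    and jk: "j < 2*g" "k < 2*g" and minor: "\<not> int p dvd minor2 (exp_sum u\<^sub>1) (exp_sum u\<^sub>2) j k"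
  obtains f where "surface_epi_subst g 2 f"
    "\<not> int p dvd minor2 (exp_sum (free_subst f u\<^sub>1)) (exp_sum (free_subst f u\<^sub>2)) 0 1"
proof (cases "\<exists>a<2*g. \<exists>b<2*g. a div 2 \<noteq> b div 2 \<and>
                \<not> int p dvd minor2 (exp_sum u\<^sub>1) (exp_sum u\<^sub>2) a b")
  case True
  then obtain a b where ab: "a < 2*g" "b < 2*g" "a div 2 \<noteq> b div 2"
    "\<not> int p dvd minor2 (exp_sum u\<^sub>1) (exp_sum u\<^sub>2) a b" by blast
  then have ab': "a \<noteq> b" by blast
  have "minor2 (exp_sum (free_subst (select_gens a b) u\<^sub>1))
                    (exp_sum (free_subst (select_gens a b) u\<^sub>2)) 0 1
               = minor2 (exp_sum u\<^sub>1) (exp_sum u\<^sub>2) a b"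
    unfolding minor2_def
    by (simp only: exp_sum_free_subst_select_gens(1)[OF u\<^sub>1 ab(1) ab']
                   exp_sum_free_subst_select_gens(2)[OF u\<^sub>1 ab(1) ab' ab(2)]
                   exp_sum_free_subst_select_gens(1)[OF u\<^sub>2 ab(1) ab']
                   exp_sum_free_subst_select_gens(2)[OF u\<^sub>2 ab(1) ab' ab(2)])
  then show ?thesis using that[OF select_gens_surface_epi_subst_2[OF ab(1-3)]] ab(4) by simp
next
  case False
  then obtain i i' where "i \<noteq> i'" "i < g" "i' < g"
    "\<not> int p dvd minor2 (exp_sum (free_subst (twist_handles i i') u\<^sub>1))
                       (exp_sum (free_subst (twist_handles i i') u\<^sub>2)) 0 1"
    using twist_handles_minor[OF p g u\<^sub>1 u\<^sub>2 jk minor] by blast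
  then show ?thesis using that twist_handles_surface_epi_subst by blast
qed

lemma exists_covering_surface_epi_subst:
  assumes p: "Factorial_Ring.prime p" and g: "g \<ge> 2" and r: "r \<in> {1, 2}"
    and H: "subgroup H (ab_modp p (surface_group g))"
    and rank: "subgroup_rank (ab_modp p (surface_group g)) H \<ge> r"
  obtains f where "surface_epi_subst g r f"
    "\<forall>t. \<exists>w\<in>carrier (free_grp (2*g)). surface_modp_class p g w \<in> H \<and>
           (\<forall>k<r. [exp_sum (free_subst f w) k = t k] (mod int p))"
proof (cases "r = 1")
  case True
  have p0: "p > 0" using p prime_gt_0_nat by blast
  obtain w c where w: "w \<in> carrier (free_grp (2*g))" "surface_modp_class p g w \<in> H"
    and c: "c < 2*g" "\<not> int p dvd exp_sum w c"
    using surface_subgroup_rank_ge_1[OF p0 H] rank True by auto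
  let ?f = "select_gens c (2*g)"
  \<comment> \<open>2g is not the index of a generator of F_2g, so only x_c is not sent to 1\<close>
  obtain u where u: "[exp_sum w c * u = 1] (mod int p)" using cong_inverse_mod_prime[OF p c(2)] .
  have E: "exp_sum (free_subst ?f w) 0 = exp_sum w c"
    using exp_sum_free_subst_select_gens(1)[OF w(1) c(1)] c(1) by simp
  have "\<forall>t. \<exists>a b. \<forall>k<r.
      [a * exp_sum (free_subst ?f w) k + b * exp_sum (free_subst ?f w) k = t k] (mod int p)"
  proof
    fix t :: "nat \<Rightarrow> int"
    have "[t 0 * u * exp_sum w c + 0 * exp_sum w c = t 0] (mod int p)"
      using cong_scalar_left[OF u, of "t 0"] by (simp add: ac_simps)
    then show "\<exists>a b. \<forall>k<r.
        [a * exp_sum (free_subst ?f w) k + b * exp_sum (free_subst ?f w) k = t k] (mod int p)"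
      using True E by (intro exI[of _ "t 0 * u"] exI[of _ 0]) auto
  qed
  then show ?thesis
    using that select_gens_surface_epi_subst_1[OF c(1)] True
      surface_lift_covers[OF surface_epi_subst_hom H w w] by blast
next
  case False
  then have r: "r = 2" using r by simp
  obtain u\<^sub>1 u\<^sub>2 j k where u: "u\<^sub>1 \<in> carrier (free_grp (2*g))" "surface_modp_class p g u\<^sub>1 \<in> H"
    "u\<^sub>2 \<in> carrier (free_grp (2*g))" "surface_modp_class p g u\<^sub>2 \<in> H"
    and jk: "j < 2*g" "k < 2*g" "\<not> int p dvd minor2 (exp_sum u\<^sub>1) (exp_sum u\<^sub>2) j k"
    using surface_subgroup_rank_ge_2[OF p H] rank r by metis
  obtain f where f: "surface_epi_subst g 2 f"
    "\<not> int p dvd minor2 (exp_sum (free_subst f u\<^sub>1)) (exp_sum (free_subst f u\<^sub>2)) 0 1"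
    using exists_surface_epi_subst_2[OF p g u(1,3) jk] by blast
  then show ?thesis
    using that surface_lift_covers[OF surface_epi_subst_hom[OF f(1)] H u]
      solve_2x2_mod_prime[OF p f(2)] r f(1) by blast
qed

theorem lemma11:
  fixes p g r :: nat and H :: "(nat \<times> bool) list set set set"
  assumes "Factorial_Ring.prime p" and "g \<ge> 2" and "r \<in> {1, 2}"
    and "subgroup H (ab_modp p (surface_group g))"
    and "subgroup_rank (ab_modp p (surface_group g)) H \<ge> r"
  shows "\<exists>q. q \<in> hom (surface_group g) (free_grp r)
           \<and> q ` carrier (surface_group g) = carrier (free_grp r)
           \<and> (\<forall>y \<in> carrier (ab_modp p (free_grp r)).
                \<exists>h \<in> H. \<exists>x \<in> h. y = ab_modp_sub p (free_grp r) #>\<^bsub>free_grp r\<^esub> q x)"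
proof -
  obtain f where f: "surface_epi_subst g r f"
    and covers: "\<forall>t. \<exists>w\<in>carrier (free_grp (2*g)). surface_modp_class p g w \<in> H \<and>
                   (\<forall>k<r. [exp_sum (free_subst f w) k = t k] (mod int p))"
    using exists_covering_surface_epi_subst[OF assms] by blast
  have "p > 0" using assms(1) prime_gt_0_nat by blast
  then show ?thesis by (rule surface_epi_onto_ab_modp[OF f _ covers])
qed

end
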